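(* Let $\mathcal{H}$ be a right quaternionic Hilbert space and $x_1,\dots,x_n\in\mathcal{H}$ unit vectors. Then for each $m\in\mathbb{N}$ there exist unit vectors $x_{1,m},\dots,x_{n,m}\in\mathbb{H}^n$ such that $\langle x_{i,m},x_{j,m}\rangle=\langle x_i,x_j\rangle\,|\langle x_i,x_j\rangle|^{2m}$ for all $i,j$.
   Context: A right quaternionic Hilbert space is a right $\mathbb{H}$-vector space with inner product satisfying $\langle y,x\rangle=\overline{\langle x,y\rangle}$, $\langle xa+yb,z\rangle=\bar a\langle x,z\rangle+\bar b\langle y,z\rangle$, $\langle z,xa+yb\rangle=\langle z,x\rangle a+\langle z,y\rangle b$, $\langle x,x\rangle>0$ for $x\ne0$. $\mathbb{H}^n$ carries $\langle x,y\rangle=\sum_k\bar x_ky_k$. *)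

theory Defs
  imports "HOL-Analysis.Analysis"
begin

datatype quat = Quat (Re: real) (Im1: real) (Im2: real) (Im3: real)

lemma quat_eq_iff: "x = y \<longleftrightarrow> Re x = Re y \<and> Im1 x = Im1 y \<and> Im2 x = Im2 y \<and> Im3 x = Im3 y"
  by (cases x; cases y) auto

instantiation quat :: ring_1
begin
definition "0 = Quat 0 0 0 0"
definition "1 = Quat 1 0 0 0"
definition "x + y = Quat (Re x + Re y) (Im1 x + Im1 y) (Im2 x + Im2 y) (Im3 x + Im3 y)"
definition "x - y = Quat (Re x - Re y) (Im1 x - Im1 y) (Im2 x - Im2 y) (Im3 x - Im3 y)"
definition "- x = Quat (- Re x) (- Im1 x) (- Im2 x) (- Im3 x)"
definition "x * y = Quat
   (Re x * Re y - Im1 x * Im1 y - Im2 x * Im2 y - Im3 x * Im3 y)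
   (Re x * Im1 y + Im1 x * Re y + Im2 x * Im3 y - Im3 x * Im2 y)
   (Re x * Im2 y - Im1 x * Im3 y + Im2 x * Re y + Im3 x * Im1 y)
   (Re x * Im3 y + Im1 x * Im2 y - Im2 x * Im1 y + Im3 x * Re y)"
instance
  by standard (auto simp: quat_eq_iff zero_quat_def one_quat_def plus_quat_def
      minus_quat_def uminus_quat_def times_quat_def algebra_simps)
end

definition qcnj :: "quat \<Rightarrow> quat" where
  "qcnj x = Quat (Re x) (- Im1 x) (- Im2 x) (- Im3 x)"

definition qabs :: "quat \<Rightarrow> real" where
  "qabs x = sqrt ((Re x)\<^sup>2 + (Im1 x)\<^sup>2 + (Im2 x)\<^sup>2 + (Im3 x)\<^sup>2)"

definition quat_of_real :: "real \<Rightarrow> quat" where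
  "quat_of_real r = Quat r 0 0 0"

definition qhs_norm :: "('v \<Rightarrow> 'v \<Rightarrow> quat) \<Rightarrow> 'v \<Rightarrow> real" where
  "qhs_norm ip x = sqrt (Re (ip x x))"

definition right_quat_hilbert_space ::
  "('v::ab_group_add \<Rightarrow> quat \<Rightarrow> 'v) \<Rightarrow> ('v \<Rightarrow> 'v \<Rightarrow> quat) \<Rightarrow> bool" where
  "right_quat_hilbert_space smul ip \<longleftrightarrow>
     \<comment> \<open>right H-vector space\<close>
     (\<forall>x a b. smul (smul x a) b = smul x (a * b)) \<and>
     (\<forall>x. smul x 1 = x) \<and>
     (\<forall>x y a. smul (x + y) a = smul x a + smul y a) \<and>
     (\<forall>x a b. smul x (a + b) = smul x a + smul x b) \<and>
     \<comment> \<open>inner product axioms\<close>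
     (\<forall>x y. ip y x = qcnj (ip x y)) \<and>
     (\<forall>x y z a b. ip (smul x a + smul y b) z = qcnj a * ip x z + qcnj b * ip y z) \<and>
     (\<forall>x y z a b. ip z (smul x a + smul y b) = ip z x * a + ip z y * b) \<and>
     (\<forall>x. x \<noteq> 0 \<longrightarrow> Im1 (ip x x) = 0 \<and> Im2 (ip x x) = 0 \<and> Im3 (ip x x) = 0 \<and> Re (ip x x) > 0) \<and>
     \<comment> \<open>completeness w.r.t. the norm induced by the inner product\<close>
     (\<forall>s :: nat \<Rightarrow> 'v.
        (\<forall>e>0. \<exists>N. \<forall>p\<ge>N. \<forall>q\<ge>N. qhs_norm ip (s p - s q) < e) \<longrightarrow>
        (\<exists>l. \<forall>e>0. \<exists>N. \<forall>p\<ge>N. qhs_norm ip (s p - l) < e))"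

text \<open>The standard inner product on H^n; vectors of H^n are represented as functions
  nat => quat of which only the coordinates 0..n-1 are used.\<close>
definition qinner_n :: "nat \<Rightarrow> (nat \<Rightarrow> quat) \<Rightarrow> (nat \<Rightarrow> quat) \<Rightarrow> quat" where
  "qinner_n n x y = (\<Sum>k<n. qcnj (x k) * y k)"

end

theory Submission
  imports Defs "HOL-Library.Countable"
begin

text \<open>The Gram matrix \<open>G\<close> of \<open>x\<^sub>1, \<dots>, x\<^sub>n\<close> is Hermitian and positive semidefinite, so a
  Cholesky-type factorisation writes \<open>G\<^sub>i\<^sub>j = \<langle>v\<^sub>i, v\<^sub>j\<rangle>\<close> with \<open>v\<^sub>i \<in> \<bbbH>\<^sup>n\<close>. Expanding
  \<open>|G\<^sub>i\<^sub>j|\<^sup>2 = Re (G\<^sub>i\<^sub>j \<cdot> conj G\<^sub>i\<^sub>j)\<close> in the real coordinates of the products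
  \<open>v\<^sub>i\<^sub>l conj v\<^sub>i\<^sub>k\<close> shows that \<open>|G|\<^sup>2\<close> is a real Gram matrix; real Gram matrices are closed
  under entrywise products (Schur), and the entrywise product of a quaternionic Gram matrix
  with a real one is again a quaternionic Gram matrix over a larger finite index set.
  Hence \<open>G\<^sub>i\<^sub>j |G\<^sub>i\<^sub>j|\<^sup>2\<^sup>m\<close> is Hermitian positive semidefinite, and a second factorisation
  realises it by vectors of \<open>\<bbbH>\<^sup>n\<close>; these are unit vectors since \<open>G\<^sub>i\<^sub>i = 1\<close>.\<close>

lemmas quat_defs = zero_quat_def one_quat_def plus_quat_def minus_quat_def uminus_quat_def
  times_quat_def qcnj_def

instantiation quat :: real_vector
begin
definition "r *\<^sub>R x = Quat (r * Re x) (r * Im1 x) (r * Im2 x) (r * Im3 x)"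
instance
  by standard (simp_all add: quat_eq_iff scaleR_quat_def plus_quat_def algebra_simps)
end

instance quat :: real_algebra_1
  by standard (simp_all add: quat_eq_iff scaleR_quat_def times_quat_def algebra_simps)

lemma quat_of_real_eq_of_real: "quat_of_real r = of_real r"
  by (simp add: quat_eq_iff quat_of_real_def of_real_def scaleR_quat_def one_quat_def)

lemma of_real_mult_commute: "of_real r * x = x * (of_real r :: 'a::real_algebra_1)"
  by (simp add: of_real_def)

lemma Re_add [simp]: "Re (a + b) = Re a + Re b"
  and Re_zero [simp]: "Re 0 = 0"
  and Re_one [simp]: "Re 1 = 1"
  and Re_diff [simp]: "Re (a - b) = Re a - Re b"
  and Re_of_real_mult [simp]: "Re (of_real r * a) = r * Re a"
  by (simp_all add: quat_defs of_real_def scaleR_quat_def)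

lemma Re_of_real [simp]: "Re (of_real r) = r"
  using Re_of_real_mult[of r 1] by simp

lemma Re_sum: "Re (sum f S) = (\<Sum>x\<in>S. Re (f x))"
  by (induction S rule: infinite_finite_induct) auto

lemma Re_mult_commute: "Re (a * b) = Re (b * a)"
  by (simp add: quat_defs algebra_simps)

lemma qcnj_mult: "qcnj (a * b) = qcnj b * qcnj a"
  and qcnj_add [simp]: "qcnj (a + b) = qcnj a + qcnj b"
  and qcnj_diff [simp]: "qcnj (a - b) = qcnj a - qcnj b"
  and qcnj_minus [simp]: "qcnj (- a) = - qcnj a"
  and qcnj_zero [simp]: "qcnj 0 = 0"
  and qcnj_one [simp]: "qcnj 1 = 1"
  and qcnj_qcnj [simp]: "qcnj (qcnj a) = a"
  and qcnj_of_real [simp]: "qcnj (of_real r) = of_real r"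
  by (simp_all add: quat_eq_iff quat_defs of_real_def scaleR_quat_def algebra_simps)

lemma qcnj_sum: "qcnj (sum f S) = (\<Sum>x\<in>S. qcnj (f x))"
  by (induction S rule: infinite_finite_induct) auto

lemma qcnj_mult_self: "qcnj a * a = of_real (qabs a ^ 2)"
  and mult_qcnj_self: "a * qcnj a = of_real (qabs a ^ 2)"
  by (simp_all add: quat_eq_iff quat_defs qabs_def of_real_def scaleR_quat_def
      algebra_simps power2_eq_square)

lemma qabs_sq_eq_Re: "qabs a ^ 2 = Re (a * qcnj a)"
  by (simp add: mult_qcnj_self del: of_real_power)

lemma qabs_eq_0_iff: "qabs a = 0 \<longleftrightarrow> a = 0"
  by (simp add: qabs_def quat_eq_iff zero_quat_def add_nonneg_eq_0_iff)

lemma qabs_one: "qabs 1 = 1"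
  by (simp add: qabs_def one_quat_def)

lemma qcnj_eq_self_imp_real: "qcnj a = a \<Longrightarrow> a = of_real (Re a)"
  by (simp add: quat_eq_iff qcnj_def of_real_def scaleR_quat_def one_quat_def)

lemma qcnj_mult_of_real_mult: "qcnj (p * of_real r) * (q * of_real t) = qcnj p * q * of_real (r * t)"
  by (simp add: qcnj_mult mult.assoc of_real_mult_commute[of r])

definition quat_component :: "nat \<Rightarrow> quat \<Rightarrow> real" where
  "quat_component c q =
     (if c = 0 then Re q else if c = 1 then Im1 q else if c = 2 then Im2 q else Im3 q)"

lemma Re_mult_qcnj: "Re (p * qcnj q) = (\<Sum>c<4. quat_component c p * quat_component c q)"
  by (simp add: eval_nat_numeral quat_component_def times_quat_def qcnj_def)

section \<open>Hermitian positive semidefinite matrices\<close>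

definition hermitian :: "nat \<Rightarrow> (nat \<Rightarrow> nat \<Rightarrow> quat) \<Rightarrow> bool" where
  "hermitian n K \<longleftrightarrow> (\<forall>i<n. \<forall>j<n. K j i = qcnj (K i j))"

definition quad_form :: "nat \<Rightarrow> (nat \<Rightarrow> nat \<Rightarrow> quat) \<Rightarrow> (nat \<Rightarrow> quat) \<Rightarrow> quat" where
  "quad_form n K q = (\<Sum>i<n. \<Sum>j<n. qcnj (q i) * K i j * q j)"

definition psd :: "nat \<Rightarrow> (nat \<Rightarrow> nat \<Rightarrow> quat) \<Rightarrow> bool" where
  "psd n K \<longleftrightarrow> (\<forall>q. 0 \<le> Re (quad_form n K q))"

lemma quad_form_Suc:
  "quad_form (Suc n) K (q(n := p)) = quad_form n K q + (\<Sum>i<n. qcnj (q i) * K i n) * p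
     + qcnj p * (\<Sum>j<n. K n j * q j) + qcnj p * K n n * p"
proof -
  have rows: "(\<Sum>i<n. \<Sum>j<Suc n. qcnj ((q(n:=p)) i) * K i j * (q(n:=p)) j)
     = (\<Sum>i<n. (\<Sum>j<n. qcnj (q i) * K i j * q j) + qcnj (q i) * K i n * p)"
    by (auto intro!: sum.cong)
  have last_row: "(\<Sum>j<Suc n. qcnj ((q(n:=p)) n) * K n j * (q(n:=p)) j)
     = (\<Sum>j<n. qcnj p * K n j * q j) + qcnj p * K n n * p"
    by (auto intro!: sum.cong)
  show ?thesis
    unfolding quad_form_def sum.lessThan_Suc[of _ n] rows last_row
    by (simp add: sum.distrib sum_distrib_left sum_distrib_right mult.assoc)
qed

lemma quad_form_unit:
  assumes "j < n"
  shows "quad_form n K ((\<lambda>_. 0)(j := c)) = qcnj c * K j j * c"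
  using assms by (simp add: quad_form_def if_distrib[of "\<lambda>x. _ * x"] if_distrib[of "\<lambda>x. x * _"]
      if_distrib[of qcnj] cong: if_cong)

lemma psd_diag:
  assumes "hermitian n K" "psd n K" "j < n"
  shows "K j j = of_real (Re (K j j))" "0 \<le> Re (K j j)"
proof -
  show "K j j = of_real (Re (K j j))"
    using assms(1,3) unfolding hermitian_def by (metis qcnj_eq_self_imp_real)
  have "0 \<le> Re (quad_form n K ((\<lambda>_. 0)(j := 1)))"
    using assms(2) unfolding psd_def by blast
  then show "0 \<le> Re (K j j)"
    using quad_form_unit[OF assms(3), of K 1] by simp
qed

lemma psd_zero_diag_imp_zero_row:
  assumes "hermitian (Suc n) K" "psd (Suc n) K" "Re (K n n) = 0" "j < n"
  shows "K n j = 0"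
proof (rule ccontr)
  define b where "b = K n j"
  define N where "N = qabs b ^ 2"
  define d where "d = Re (K j j)"
  define t where "t = (d + 1) / N"
  assume "K n j \<noteq> 0"
  then have "N > 0"
    unfolding N_def b_def by (simp add: qabs_eq_0_iff)
  then have tN: "N * t = d + 1"
    unfolding t_def by simp
  have "d \<ge> 0"
    using psd_diag(2)[OF assms(1,2)] assms(4) unfolding d_def by simp
  have Knn: "K n n = 0"
    using psd_diag(1)[OF assms(1,2) lessI] assms(3) by simp
  have Kjn: "K j n = qcnj b"
    using assms(1,4) unfolding hermitian_def b_def by (meson less_SucI lessI)
  \<comment> \<open>on \<open>e\<^sub>j - t b e\<^sub>n\<close> the form is \<open>K j j - 2 t |b|\<^sup>2\<close>, negative for large \<open>t\<close>\<close>
  let ?e = "(\<lambda>_. 0)(j := 1)"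
  let ?p = "- of_real t * b"
  have "(\<Sum>i<n. qcnj (?e i) * K i n) = K j n" "(\<Sum>i<n. K n i * ?e i) = K n j"
    using assms(4) by (simp_all add: if_distrib[of "\<lambda>x. _ * x"] if_distrib[of "\<lambda>x. x * _"]
        if_distrib[of qcnj] cong: if_cong)
  then have "quad_form (Suc n) K (?e(n := ?p)) = K j j + qcnj b * ?p + qcnj ?p * b"
    using assms(4) by (simp add: quad_form_Suc quad_form_unit Knn Kjn b_def)
  also have "\<dots> = K j j - 2 * (qcnj b * b) * of_real t"
    by (simp add: qcnj_mult of_real_mult_commute[of t] mult.assoc mult_2 distrib_right)
  also have "\<dots> = K j j - of_real (2 * N * t)"
    by (simp add: qcnj_mult_self N_def)
  finally have "quad_form (Suc n) K (?e(n := ?p)) = K j j - of_real (2 * N * t)" .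
  then have "Re (quad_form (Suc n) K (?e(n := ?p))) = d - 2 * N * t"
    unfolding d_def by (simp del: of_real_mult)
  moreover have "d - 2 * N * t < 0"
    using tN \<open>d \<ge> 0\<close> by linarith
  ultimately show False
    using assms(2) unfolding psd_def by (metis not_le)
qed

text \<open>If \<open>Re (K n n) = 0\<close> then \<open>1 / 0 = 0\<close> turns \<open>S\<close> into the leading block of \<open>K\<close>, and the
  proof below covers this case without change.\<close>

lemma schur_complement_hermitian_psd:
  assumes "hermitian (Suc n) K" "psd (Suc n) K"
  defines "S \<equiv> \<lambda>i j. K i j - K i n * K n j * of_real (1 / Re (K n n))"
  shows "hermitian n S" "psd n S"
proof -
  define a where "a = Re (K n n)"
  define r :: quat where "r = of_real (1 / a)"
  have Knn: "K n n = of_real a"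
    using psd_diag(1)[OF assms(1,2) lessI] unfolding a_def .
  have Kin: "K i n = qcnj (K n i)" if "i < n" for i
    using assms(1) that unfolding hermitian_def by (meson less_SucI lessI)
  have r_commute: "r * q = q * r" for q
    unfolding r_def by (rule of_real_mult_commute)
  have qcnj_r: "qcnj r = r"
    unfolding r_def by simp
  show "hermitian n S"
    unfolding hermitian_def
  proof (intro allI impI)
    fix i j assume ij: "i < n" "j < n"
    then have "K j i = qcnj (K i j)"
      using assms(1) unfolding hermitian_def by (meson less_SucI)
    then show "S j i = qcnj (S i j)"
      unfolding S_def a_def[symmetric] r_def[symmetric]
      by (simp add: qcnj_mult Kin ij mult.assoc r_commute qcnj_r)
  qed
  show "psd n S"
    unfolding psd_def
  proof
    fix q
    define b where "b = (\<Sum>j<n. K n j * q j)"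
    have b': "(\<Sum>i<n. qcnj (q i) * K i n) = qcnj b"
      unfolding b_def qcnj_sum by (auto simp: qcnj_mult Kin intro: sum.cong)
    have "quad_form n S q = quad_form n K q - qcnj b * r * b"
    proof -
      have "qcnj b * r * b = (\<Sum>i<n. qcnj (q i) * K i n) * (b * r)"
        by (simp add: b' mult.assoc r_commute)
      also have "\<dots> = (\<Sum>i<n. \<Sum>j<n. qcnj (q i) * (K i n * K n j * r) * q j)"
        unfolding b_def sum_distrib_right by (simp add: r_commute mult.assoc sum_distrib_left)
      finally show ?thesis
        unfolding quad_form_def S_def a_def[symmetric] r_def[symmetric]
        by (simp add: sum_subtractf algebra_simps)
    qed
    also have "\<dots> = quad_form (Suc n) K (q(n := - r * b))"
    proof -
      have "quad_form (Suc n) K (q(n := - r * b))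
          = quad_form n K q - qcnj b * r * b - qcnj b * r * b + qcnj b * (r * of_real a * r) * b"
        by (simp add: quad_form_Suc Knn b_def[symmetric] b' qcnj_mult qcnj_r algebra_simps)
      moreover have "r * of_real a * r = r"
        unfolding r_def by (simp flip: of_real_mult)
      ultimately show ?thesis
        by simp
    qed
    finally show "0 \<le> Re (quad_form n S q)"
      using assms(2) unfolding psd_def by simp
  qed
qed

lemma qinner_n_Suc: "qinner_n (Suc n) x y = qinner_n n x y + qcnj (x n) * y n"
  by (simp add: qinner_n_def)

lemma gram_extend_by_schur_complement:
  assumes "hermitian (Suc n) K" "psd (Suc n) K"
    and Y: "\<forall>i<n. \<forall>j<n. K i j - K i n * K n j * of_real (1 / Re (K n n)) = qinner_n n (Y i) (Y j)"
  shows "\<exists>X. \<forall>i<Suc n. \<forall>j<Suc n. K i j = qinner_n (Suc n) (X i) (X j)"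
proof -
  define a where "a = Re (K n n)"
  define s where "s = sqrt a"
  have Knn: "K n n = of_real a" and "a \<ge> 0"
    using psd_diag[OF assms(1,2) lessI] unfolding a_def by simp_all
  then have s: "s * s = a" "s \<ge> 0"
    unfolding s_def by simp_all
  have Kin: "K i n = qcnj (K n i)" if "i < n" for i
    using assms(1) that unfolding hermitian_def by (meson less_SucI lessI)
  have row: "of_real s * (K n j * of_real (1 / s)) = K n j" if "j < n" for j
  proof (cases "a = 0")
    case True
    then show ?thesis
      using psd_zero_diag_imp_zero_row[OF assms(1,2) _ that] unfolding a_def by simp
  next
    case False
    then have "1 / s * s = 1"
      using s by auto
    then show ?thesis
      by (simp add: of_real_mult_commute[of s] mult.assoc flip: of_real_mult)
  qed
  define X where "X i k = (if i = n then (if k = n then of_real s else 0)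
       else if k = n then K n i * of_real (1 / s) else Y i k)" for i k
  have "K i j = qinner_n (Suc n) (X i) (X j)" if ij: "i < Suc n" "j < Suc n" for i j
  proof -
    consider "i < n" "j < n" | "i = n" "j < n" | "i < n" "j = n" | "i = n" "j = n"
      using ij unfolding less_Suc_eq by blast
    then show ?thesis
    proof cases
      case 1
      have "qinner_n n (X i) (X j) = K i j - K i n * K n j * of_real (1 / a)"
        using Y 1 unfolding a_def by (simp add: qinner_n_def X_def)
      moreover have "qcnj (X i n) * X j n = K i n * K n j * of_real (1 / a)"
        using 1 s by (simp add: X_def qcnj_mult_of_real_mult Kin)
      ultimately show ?thesis
        unfolding qinner_n_Suc by simp
    next
      case 2
      then show ?thesis
        using row by (simp add: qinner_n_Suc qinner_n_def X_def)
    next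
      case 3
      then have "qcnj (X i n) * X n n = qcnj (qcnj (X n n) * X i n)"
        by (simp add: qcnj_mult)
      then show ?thesis
        using 3 row Kin by (simp add: qinner_n_Suc qinner_n_def X_def)
    next
      case 4
      then show ?thesis
        using s Knn by (simp add: qinner_n_Suc qinner_n_def X_def flip: of_real_mult)
    qed
  qed
  then show ?thesis by blast
qed

lemma hermitian_psd_imp_gram:
  "hermitian n K \<Longrightarrow> psd n K \<Longrightarrow> \<exists>X. \<forall>i<n. \<forall>j<n. K i j = qinner_n n (X i) (X j)"
proof (induction n arbitrary: K)
  case 0
  then show ?case by simp
next
  case (Suc n)
  obtain Y where
    "\<forall>i<n. \<forall>j<n. K i j - K i n * K n j * of_real (1 / Re (K n n)) = qinner_n n (Y i) (Y j)"
    using Suc.IH schur_complement_hermitian_psd[OF Suc.prems] by blast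
  then show ?case
    by (rule gram_extend_by_schur_complement[OF Suc.prems])
qed

section \<open>Gram matrices\<close>

lemma gram_hermitian_psd:
  assumes "finite T" and K: "\<And>i j. K i j = (\<Sum>t\<in>T. qcnj (u i t) * u j t)"
  shows "hermitian n K" "psd n K"
proof -
  show "hermitian n K"
    unfolding hermitian_def K qcnj_sum by (simp add: qcnj_mult)
  show "psd n K"
    unfolding psd_def
  proof
    fix q
    define c where "c t = (\<Sum>j<n. u j t * q j)" for t
    have "quad_form n K q = (\<Sum>t\<in>T. \<Sum>i<n. \<Sum>j<n. qcnj (q i) * qcnj (u i t) * (u j t * q j))"
      unfolding quad_form_def K sum_distrib_left sum_distrib_right
      by (simp add: mult.assoc sum.swap[of _ T])
    also have "\<dots> = (\<Sum>t\<in>T. qcnj (c t) * c t)"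
      unfolding c_def qcnj_sum sum_product by (simp add: qcnj_mult)
    finally show "0 \<le> Re (quad_form n K q)"
      by (simp add: Re_sum sum_nonneg qcnj_mult_self del: of_real_power)
  qed
qed

lemma right_quat_hilbert_spaceD:
  assumes "right_quat_hilbert_space smul ip"
  shows "smul x 1 = x"
    and "smul x (a + b) = smul x a + smul x b"
    and "ip y x = qcnj (ip x y)"
    and "ip (smul x a + smul y b) z = qcnj a * ip x z + qcnj b * ip y z"
    and "ip z (smul x a + smul y b) = ip z x * a + ip z y * b"
    and "x \<noteq> 0 \<Longrightarrow> 0 < Re (ip x x)"
  using assms unfolding right_quat_hilbert_space_def by meson+

lemma hilbert_ip_sum_smul:
  assumes "right_quat_hilbert_space smul ip"
  shows "ip (\<Sum>i\<in>I. smul (x i) (a i)) z = (\<Sum>i\<in>I. qcnj (a i) * ip (x i) z)"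
    and "ip z (\<Sum>i\<in>I. smul (x i) (a i)) = (\<Sum>i\<in>I. ip z (x i) * a i)"
proof -
  note hs = right_quat_hilbert_spaceD[OF assms]
  have smul_0: "smul y 0 = 0" for y
    using hs(2)[of y 0 0] by simp
  show "ip (\<Sum>i\<in>I. smul (x i) (a i)) z = (\<Sum>i\<in>I. qcnj (a i) * ip (x i) z)"
  proof (induction I rule: infinite_finite_induct)
    case (insert i I)
    then show ?case
      using hs(4)[of "x i" "a i" "\<Sum>i\<in>I. smul (x i) (a i)" 1] by (simp add: hs(1))
  qed (use hs(4)[of 0 0 0 0] in \<open>simp_all add: smul_0\<close>)
  show "ip z (\<Sum>i\<in>I. smul (x i) (a i)) = (\<Sum>i\<in>I. ip z (x i) * a i)"
  proof (induction I rule: infinite_finite_induct)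
    case (insert i I)
    then show ?case
      using hs(5)[of z "x i" "a i" "\<Sum>i\<in>I. smul (x i) (a i)" 1] by (simp add: hs(1))
  qed (use hs(5)[of z 0 0 0 0] in \<open>simp_all add: smul_0\<close>)
qed

lemma hilbert_gram_hermitian_psd:
  assumes "right_quat_hilbert_space smul ip"
  shows "hermitian n (\<lambda>i j. ip (x i) (x j))" "psd n (\<lambda>i j. ip (x i) (x j))"
proof -
  show "hermitian n (\<lambda>i j. ip (x i) (x j))"
    unfolding hermitian_def using right_quat_hilbert_spaceD(3)[OF assms] by blast
  show "psd n (\<lambda>i j. ip (x i) (x j))"
    unfolding psd_def
  proof
    fix q
    define y where "y = (\<Sum>i<n. smul (x i) (q i))"
    have ip_y_right: "ip z y = (\<Sum>j<n. ip z (x j) * q j)" for z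
      unfolding y_def by (rule hilbert_ip_sum_smul(2)[OF assms])
    have "ip y y = (\<Sum>i<n. qcnj (q i) * ip (x i) y)"
      unfolding y_def by (rule hilbert_ip_sum_smul(1)[OF assms])
    also have "\<dots> = quad_form n (\<lambda>i j. ip (x i) (x j)) q"
      unfolding ip_y_right quad_form_def sum_distrib_left by (simp add: mult.assoc)
    finally have "ip y y = quad_form n (\<lambda>i j. ip (x i) (x j)) q" .
    moreover have "0 \<le> Re (ip y y)"
    proof (cases "y = 0")
      case True
      then show ?thesis
        using hilbert_ip_sum_smul(1)[OF assms, of _ _ "{}"] by simp
    next
      case False
      then show ?thesis
        using right_quat_hilbert_spaceD(6)[OF assms] by (simp add: less_imp_le)
    qed
    ultimately show "0 \<le> Re (quad_form n (\<lambda>i j. ip (x i) (x j)) q)"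
      by simp
  qed
qed

section \<open>Real Gram kernels\<close>

text \<open>The finite index set is coded as a set of naturals because a definition cannot quantify
  over types; \<open>real_gramI\<close> accepts any countable index type.\<close>

definition real_gram :: "(nat \<Rightarrow> nat \<Rightarrow> real) \<Rightarrow> bool" where
  "real_gram W \<longleftrightarrow> (\<exists>(S :: nat set) f. finite S \<and> (\<forall>i j. W i j = (\<Sum>s\<in>S. f s i * f s j)))"

lemma real_gramI:
  fixes S :: "'b::countable set"
  assumes "finite S" "\<And>i j. W i j = (\<Sum>s\<in>S. f s i * f s j)"
  shows "real_gram W"
  unfolding real_gram_def
proof (intro exI conjI allI)
  show "finite (to_nat ` S)"
    using assms(1) by simp
  show "W i j = (\<Sum>s\<in>to_nat ` S. f (from_nat s) i * f (from_nat s) j)" for i j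
    by (subst sum.reindex) (auto simp: assms(2))
qed

lemma real_gram_mult:
  assumes "real_gram W" "real_gram V"
  shows "real_gram (\<lambda>i j. W i j * V i j)"
proof -
  obtain S :: "nat set" and f where "finite S" and W: "\<And>i j. W i j = (\<Sum>s\<in>S. f s i * f s j)"
    using assms(1) unfolding real_gram_def by blast
  obtain T :: "nat set" and g where "finite T" and V: "\<And>i j. V i j = (\<Sum>t\<in>T. g t i * g t j)"
    using assms(2) unfolding real_gram_def by blast
  show ?thesis
  proof (rule real_gramI)
    show "finite (S \<times> T)"
      using \<open>finite S\<close> \<open>finite T\<close> by simp
    show "W i j * V i j = (\<Sum>p\<in>S \<times> T. f (fst p) i * g (snd p) i * (f (fst p) j * g (snd p) j))"
      for i j
      unfolding W V sum_product sum.cartesian_product' by (simp add: algebra_simps)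
  qed
qed

lemma real_gram_power:
  assumes "real_gram W"
  shows "real_gram (\<lambda>i j. W i j ^ m)"
proof (induction m)
  case 0
  have "real_gram (\<lambda>i j. 1)"
    by (rule real_gramI[of "{()}" _ "\<lambda>_ _. 1"]) simp_all
  then show ?case
    by simp
next
  case (Suc m)
  then show ?case
    using real_gram_mult[OF assms Suc.IH] by simp
qed

lemma real_gram_qabs_qinner_sq: "real_gram (\<lambda>i j. qabs (qinner_n n (v i) (v j)) ^ 2)"
proof -
  define f where "f p i = quat_component (snd p) (v i (fst (fst p)) * qcnj (v i (snd (fst p))))"
    for p :: "(nat \<times> nat) \<times> nat" and i
  have "qabs (qinner_n n (v i) (v j)) ^ 2 = (\<Sum>p \<in> ({..<n} \<times> {..<n}) \<times> {..<4}. f p i * f p j)"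
    for i j
  proof -
    have "qabs (qinner_n n (v i) (v j)) ^ 2
        = (\<Sum>k<n. \<Sum>l<n. Re (qcnj (v i k) * v j k * (qcnj (v j l) * v i l)))"
      unfolding qabs_sq_eq_Re qinner_n_def qcnj_sum sum_product Re_sum by (simp add: qcnj_mult)
    also have "\<dots> = (\<Sum>k<n. \<Sum>l<n. Re ((v i l * qcnj (v i k)) * qcnj (v j l * qcnj (v j k))))"
    proof (intro sum.cong refl)
      fix k l
      show "Re (qcnj (v i k) * v j k * (qcnj (v j l) * v i l))
          = Re ((v i l * qcnj (v i k)) * qcnj (v j l * qcnj (v j k)))"
        using Re_mult_commute[of "qcnj (v i k) * v j k * qcnj (v j l)" "v i l"]
        by (simp add: qcnj_mult mult.assoc)
    qed
    also have "\<dots> = (\<Sum>l<n. \<Sum>k<n. \<Sum>c<4. f ((l, k), c) i * f ((l, k), c) j)"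
      unfolding Re_mult_qcnj f_def by (subst sum.swap) simp
    also have "\<dots> = (\<Sum>p \<in> ({..<n} \<times> {..<n}) \<times> {..<4}. f p i * f p j)"
      unfolding sum.cartesian_product' by simp
    finally show ?thesis .
  qed
  then show ?thesis
    by (intro real_gramI[of "({..<n} \<times> {..<n}) \<times> {..<4}"]) simp_all
qed

lemma gram_mult_real_gram:
  assumes "real_gram W"
  shows "\<exists>(S :: (nat \<times> nat) set) u. finite S \<and>
    (\<forall>i j. qinner_n n (v i) (v j) * of_real (W i j) = (\<Sum>p\<in>S. qcnj (u i p) * u j p))"
proof -
  obtain T :: "nat set" and f where "finite T" and W: "\<And>i j. W i j = (\<Sum>t\<in>T. f t i * f t j)"
    using assms unfolding real_gram_def by blast
  define u where "u i p = v i (fst p) * of_real (f (snd p) i)" for i p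
  have "qinner_n n (v i) (v j) * of_real (W i j) = (\<Sum>p\<in>{..<n} \<times> T. qcnj (u i p) * u j p)" for i j
  proof -
    have "qinner_n n (v i) (v j) * of_real (W i j)
        = (\<Sum>k<n. \<Sum>t\<in>T. qcnj (v i k) * v j k * of_real (f t i * f t j))"
      unfolding qinner_n_def W of_real_sum sum_product ..
    also have "\<dots> = (\<Sum>p\<in>{..<n} \<times> T. qcnj (u i p) * u j p)"
      unfolding sum.cartesian_product' u_def qcnj_mult_of_real_mult by simp
    finally show ?thesis .
  qed
  then show ?thesis
    using \<open>finite T\<close> by (intro exI[of _ "{..<n} \<times> T"] exI[of _ u]) simp
qed

theorem mainTheorem15:
  fixes smul :: "'v::ab_group_add \<Rightarrow> quat \<Rightarrow> 'v"
    and ip :: "'v \<Rightarrow> 'v \<Rightarrow> quat"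
    and x :: "nat \<Rightarrow> 'v"
    and n :: nat
  assumes "right_quat_hilbert_space smul ip"
    and "\<forall>i<n. ip (x i) (x i) = 1"
  shows "\<forall>m::nat. \<exists>xm :: nat \<Rightarrow> nat \<Rightarrow> quat.
           (\<forall>i<n. qinner_n n (xm i) (xm i) = 1) \<and>
           (\<forall>i<n. \<forall>j<n. qinner_n n (xm i) (xm j) =
               ip (x i) (x j) * quat_of_real (qabs (ip (x i) (x j)) ^ (2 * m)))"
proof
  fix m :: nat
  obtain v where v: "\<forall>i<n. \<forall>j<n. ip (x i) (x j) = qinner_n n (v i) (v j)"
    using hermitian_psd_imp_gram[OF hilbert_gram_hermitian_psd[OF assms(1), where n = n and x = x]]
    by blast
  have W: "real_gram (\<lambda>i j. qabs (qinner_n n (v i) (v j)) ^ (2 * m))"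
    unfolding power_mult by (rule real_gram_power[OF real_gram_qabs_qinner_sq])
  define K where "K i j = qinner_n n (v i) (v j) * of_real (qabs (qinner_n n (v i) (v j)) ^ (2 * m))"
    for i j
  obtain S :: "(nat \<times> nat) set" and u
    where "finite S" and K_gram: "\<And>i j. K i j = (\<Sum>p\<in>S. qcnj (u i p) * u j p)"
    using gram_mult_real_gram[OF W, where n = n and v = v] unfolding K_def by blast
  obtain X where X: "\<forall>i<n. \<forall>j<n. K i j = qinner_n n (X i) (X j)"
    using hermitian_psd_imp_gram[OF gram_hermitian_psd[where K = K and u = u, OF \<open>finite S\<close> K_gram]]
    by blast
  have "qinner_n n (X i) (X j) = ip (x i) (x j) * quat_of_real (qabs (ip (x i) (x j)) ^ (2 * m))"
    if "i < n" "j < n" for i j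
    using X v that unfolding K_def quat_of_real_eq_of_real by simp
  then show "\<exists>xm. (\<forall>i<n. qinner_n n (xm i) (xm i) = 1) \<and>
      (\<forall>i<n. \<forall>j<n. qinner_n n (xm i) (xm j) =
        ip (x i) (x j) * quat_of_real (qabs (ip (x i) (x j)) ^ (2 * m)))"
    using assms(2) by (intro exI[of _ X]) (simp add: qabs_one quat_of_real_eq_of_real)
qed

end
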